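(* Let $\mathcal X$ be a finite alphabet and let $(\mathcal F_n)_{n\ge1}$, $\mathcal F_n\subseteq\mathcal P(\mathcal X^n)$, be a sequence of sets of probability distributions satisfying: (1) each $\mathcal F_n$ is convex and closed; (2) $\mathcal F_1$ contains a distribution with full support on $\mathcal X$; (3) if $q\in\mathcal F_{n+1}$ then its marginal on the first $n$ symbols lies in $\mathcal F_n$; (4) if $q\in\mathcal F_n$ and $q'\in\mathcal F_m$ then $q\otimes q'\in\mathcal F_{n+m}$; (5) each $\mathcal F_n$ is invariant under permutations of the $n$ coordinates; (6) for every $p\in\mathcal P(\mathcal X)$ with $p\notin\mathcal F_1$, $D^\infty(p\|\mathcal F):=\lim_{n\to\infty}\frac1n\inf_{q\in\mathcal F_n}D(p^{\otimes n}\|q)>0$. Then for all $p\in\mathcal P(\mathcal X)$ and all $\varepsilon\in(0,1)$, \[ \lim_{n\to\infty}\frac1n D_H^\varepsilon(\mathcal F_n\,\|\,p^{\otimes n}) = D(\mathcal F\|p):=\min_{q\in\mathcal F_1}D(q\|p), \] and in particular $\mathrm{Sanov}(p\|\mathcal F)=D(\mathcal F\|p)$.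
   Context: $\mathcal P(\mathcal Y)$ is the set of probability distributions on a finite set $\mathcal Y$; $D(q\|p)=\sum_x q(x)\log(q(x)/p(x))$ is the Kullback–Leibler divergence ($+\infty$ if $q\not\ll p$). For distributions $q,r$ on $\mathcal X^n$, $D_H^\varepsilon(q\|r)=-\log\min\{\sum_{x^n}a(x^n)r(x^n): a:\mathcal X^n\to[0,1],\ \sum_{x^n}(1-a(x^n))q(x^n)\le\varepsilon\}$, and $D_H^\varepsilon(\mathcal F_n\|r)=\inf_{q\in\mathcal F_n}D_H^\varepsilon(q\|r)$. $\mathrm{Sanov}(p\|\mathcal F)=\lim_{\varepsilon\to0^+}\liminf_{n\to\infty}\frac1nD_H^\varepsilon(\mathcal F_n\|p^{\otimes n})$. *)

theory Defs
  imports "HOL-Analysis.Analysis" "HOL-Combinatorics.Permutations"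
begin

text \<open>Strings of length n over the finite alphabet 'a represent X^n.
  A distribution on X^n is a real function on 'a list vanishing off strings of length n.\<close>

definition strings :: "nat \<Rightarrow> 'a list set" where
  "strings n = {xs. length xs = n}"

definition is_dist :: "nat \<Rightarrow> ('a list \<Rightarrow> real) \<Rightarrow> bool" where
  "is_dist n q \<longleftrightarrow> (\<forall>xs. 0 \<le> q xs) \<and> (\<forall>xs. length xs \<noteq> n \<longrightarrow> q xs = 0)
     \<and> (\<Sum>xs\<in>strings n. q xs) = 1"

definition is_pdist :: "('a \<Rightarrow> real) \<Rightarrow> bool" where
  "is_pdist p \<longleftrightarrow> (\<forall>x. 0 \<le> p x) \<and> (\<Sum>x\<in>UNIV. p x) = 1"

definition iid :: "nat \<Rightarrow> ('a \<Rightarrow> real) \<Rightarrow> 'a list \<Rightarrow> real" where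
  "iid n p xs = (if length xs = n then (\<Prod>x\<leftarrow>xs. p x) else 0)"

definition marginal :: "nat \<Rightarrow> ('a::finite list \<Rightarrow> real) \<Rightarrow> 'a list \<Rightarrow> real" where
  "marginal n q xs = (if length xs = n then (\<Sum>y\<in>UNIV. q (xs @ [y])) else 0)"

definition tensor :: "nat \<Rightarrow> nat \<Rightarrow> ('a list \<Rightarrow> real) \<Rightarrow> ('a list \<Rightarrow> real) \<Rightarrow> 'a list \<Rightarrow> real" where
  "tensor n m q q' zs = (if length zs = n + m then q (take n zs) * q' (drop n zs) else 0)"

definition permute_coords :: "(nat \<Rightarrow> nat) \<Rightarrow> 'a list \<Rightarrow> 'a list" where
  "permute_coords \<sigma> xs = map (\<lambda>i. xs ! \<sigma> i) [0..<length xs]"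

definition KL :: "'b set \<Rightarrow> ('b \<Rightarrow> real) \<Rightarrow> ('b \<Rightarrow> real) \<Rightarrow> ereal" where
  "KL S q p = (if (\<forall>x\<in>S. p x = 0 \<longrightarrow> q x = 0)
      then ereal (\<Sum>x\<in>S. if q x = 0 then 0 else q x * ln (q x / p x))
      else \<infinity>)"

definition hyp_min :: "nat \<Rightarrow> real \<Rightarrow> ('a list \<Rightarrow> real) \<Rightarrow> ('a list \<Rightarrow> real) \<Rightarrow> real" where
  "hyp_min n \<epsilon> q r = Inf {(\<Sum>xs\<in>strings n. a xs * r xs) | a.
      (\<forall>xs. 0 \<le> a xs \<and> a xs \<le> 1) \<and> (\<Sum>xs\<in>strings n. (1 - a xs) * q xs) \<le> \<epsilon>}"

definition neg_log :: "real \<Rightarrow> ereal" where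
  "neg_log v = (if v \<le> 0 then \<infinity> else ereal (- ln v))"

definition DH :: "nat \<Rightarrow> real \<Rightarrow> ('a list \<Rightarrow> real) \<Rightarrow> ('a list \<Rightarrow> real) \<Rightarrow> ereal" where
  "DH n \<epsilon> q r = neg_log (hyp_min n \<epsilon> q r)"

definition DH_set :: "nat \<Rightarrow> real \<Rightarrow> ('a list \<Rightarrow> real) set \<Rightarrow> ('a list \<Rightarrow> real) \<Rightarrow> ereal" where
  "DH_set n \<epsilon> Fn r = (INF q\<in>Fn. DH n \<epsilon> q r)"

definition D_F :: "(nat \<Rightarrow> ('a list \<Rightarrow> real) set) \<Rightarrow> ('a \<Rightarrow> real) \<Rightarrow> ereal" where
  "D_F F p = (INF q\<in>F 1. KL (strings 1) q (iid 1 p))"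

definition D_reg :: "(nat \<Rightarrow> ('a list \<Rightarrow> real) set) \<Rightarrow> ('a \<Rightarrow> real) \<Rightarrow> nat \<Rightarrow> ereal" where
  "D_reg F p n = (INF q\<in>F n. KL (strings n) (iid n p) q) / ereal (real n)"

end

(* Upper bound: for q in F_1 with D(q||p) close to D(F||p), the tensor property puts q^n in F_n, and
   a Chernoff-type change of measure shows that, for large n, every test with error at most eps
   under q^n has error at least ((1 - eps) / 2) exp (-n (D(q||p) + delta)) under p^n.

   Lower bound: choose c' < D(F||p) and use the test that declares p exactly when the empirical
   type t of the string satisfies D(t||p) <= c'.  By the method of types its error under p^n is at
   most (n + 1)^|X| exp (-n c').  Its error under q in F_n is the q-mass of the set K of such
   types, and this is small uniformly on F_n: K is compact and disjoint from F_1.  If some q in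
   F_n gave mass mu to the types near s in K, then the k-letter marginal of the symmetrization of
   q would be an element of F_k dominating mu exp (-2 eta k) s^k, so D(s^k||F_k) <= -ln mu + 2 eta k,
   which contradicts the positive Stein exponent of s once k is large.  A finite subcover of K
   makes the bound uniform. *)

theory Submission
  imports Defs "HOL-Real_Asymp.Real_Asymp"
begin

section \<open>Strings, i.i.d. distributions and tests\<close>

lemma mem_strings [simp]: "xs \<in> strings n \<longleftrightarrow> length xs = n"
  by (simp add: strings_def)

lemma finite_strings [simp]: "finite (strings n :: 'a::finite list set)"
  unfolding strings_def using finite_lists_length_eq[of "UNIV :: 'a set" n] by simp

lemma strings_0: "strings 0 = {[]}"
  by (auto simp: strings_def)

lemma sum_strings_Suc:
  fixes g :: "'a::finite list \<Rightarrow> 'b::comm_monoid_add"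
  shows "(\<Sum>x\<in>strings (Suc m). g x) = (\<Sum>b\<in>UNIV. \<Sum>z\<in>strings m. g (b # z))"
proof -
  have "bij_betw (\<lambda>(b, z). b # z) (UNIV \<times> strings m) (strings (Suc m))"
    by (rule bij_betw_byWitness[where f' = "\<lambda>x. (hd x, tl x)"]) (auto simp: length_Suc_conv)
  then have "(\<Sum>x\<in>strings (Suc m). g x) = (\<Sum>(b, z)\<in>UNIV \<times> strings m. g (b # z))"
    by (subst sum.reindex_bij_betw[symmetric]) (simp_all add: case_prod_unfold)
  then show ?thesis
    by (simp add: sum.cartesian_product)
qed

lemma strings_1: "strings 1 = range (\<lambda>b. [b])"
  by (auto simp: length_Suc_conv)

lemma sum_strings_1:
  fixes g :: "'a::finite list \<Rightarrow> 'b::comm_monoid_add"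
  shows "(\<Sum>x\<in>strings 1. g x) = (\<Sum>b\<in>UNIV. g [b])"
  unfolding strings_1 by (simp add: sum.reindex inj_on_def)

lemma sum_strings_Suc_hd:
  fixes g :: "'a::finite list \<Rightarrow> 'b::comm_monoid_add"
  shows "(\<Sum>z\<in>strings (Suc m). if z ! 0 = b then g z else 0) = (\<Sum>z\<in>strings m. g (b # z))"
proof -
  have "(\<Sum>c\<in>UNIV. \<Sum>z\<in>strings m. if c = b then g (c # z) else 0)
      = (\<Sum>c\<in>UNIV. if c = b then \<Sum>z\<in>strings m. g (c # z) else 0)"
    by (intro sum.cong) auto
  then show ?thesis
    by (simp add: sum_strings_Suc)
qed

lemma sum_strings_prod_list:
  fixes f :: "'a::finite \<Rightarrow> 'b::comm_semiring_1"
  shows "(\<Sum>x\<in>strings n. prod_list (map f x)) = (\<Sum>b\<in>UNIV. f b) ^ n"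
  by (induction n) (simp_all add: strings_0 sum_strings_Suc sum_distrib_left[symmetric] sum_distrib_right)

lemma iid_eq_prod_list: "length xs = n \<Longrightarrow> iid n p xs = prod_list (map p xs)"
  by (simp add: iid_def)

lemma iid_1_single [simp]: "iid 1 p [b] = p b"
  by (simp add: iid_def)

lemma iid_nonneg: "is_pdist p \<Longrightarrow> 0 \<le> iid n p xs"
  by (auto simp: iid_def is_pdist_def intro!: prod_list_nonneg)

lemma sum_iid:
  fixes p :: "'a::finite \<Rightarrow> real"
  shows "is_pdist p \<Longrightarrow> (\<Sum>x\<in>strings n. iid n p x) = 1"
  using sum_strings_prod_list[of p n] by (simp add: iid_def is_pdist_def)

lemma iid_Suc_eq_tensor: "iid (n + 1) p = tensor n 1 (iid n p) (iid 1 p)"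
proof
  fix zs :: "'a list"
  have "prod_list (map p zs) = prod_list (map p (take n zs)) * prod_list (map p (drop n zs))"
    by (metis append_take_drop_id map_append prod_list.append)
  then show "iid (n + 1) p zs = tensor n 1 (iid n p) (iid 1 p) zs"
    by (simp add: iid_def tensor_def)
qed

lemma is_pdist_of_dist_1:
  fixes q :: "'a::finite list \<Rightarrow> real"
  shows "is_dist 1 q \<Longrightarrow> is_pdist (\<lambda>b. q [b])"
  unfolding is_dist_def is_pdist_def sum_strings_1 by simp

lemma iid_1_of_dist_1:
  assumes "is_dist 1 q"
  shows "iid 1 (\<lambda>b. q [b]) = q"
proof
  fix xs :: "'a list"
  show "iid 1 (\<lambda>b. q [b]) xs = q xs"
    using assms by (cases "length xs = 1") (auto simp: iid_def is_dist_def length_Suc_conv)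
qed

definition abs_cont :: "('a \<Rightarrow> real) \<Rightarrow> ('a \<Rightarrow> real) \<Rightarrow> bool" where
  "abs_cont r p \<longleftrightarrow> (\<forall>b. p b = 0 \<longrightarrow> r b = 0)"

definition rel_entropy :: "('a::finite \<Rightarrow> real) \<Rightarrow> ('a \<Rightarrow> real) \<Rightarrow> real" where
  "rel_entropy r p = (\<Sum>b\<in>UNIV. if r b = 0 then 0 else r b * ln (r b / p b))"

lemma KL_iid_1:
  fixes r p :: "'a::finite \<Rightarrow> real"
  shows "KL (strings 1) (iid 1 r) (iid 1 p)
    = (if abs_cont r p then ereal (rel_entropy r p) else \<infinity>)"
proof -
  have "inj (\<lambda>b::'a. [b])"
    by (simp add: inj_on_def)
  then show ?thesis
    unfolding KL_def strings_1 sum.reindex[OF \<open>inj _\<close>] comp_def iid_1_single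
    by (simp add: abs_cont_def rel_entropy_def iid_def)
qed

lemma iid_abs_cont:
  assumes "abs_cont r p" and "iid n p xs = 0"
  shows "iid n r xs = 0"
  using assms by (force simp: iid_def abs_cont_def prod_list_zero_iff)

lemma KL_le_of_dominates:
  fixes r Q :: "'b \<Rightarrow> real"
  assumes r0: "\<And>x. x \<in> S \<Longrightarrow> 0 \<le> r x" and r1: "(\<Sum>x\<in>S. r x) = 1"
    and C: "C > 0" and dom: "\<And>x. x \<in> S \<Longrightarrow> C * r x \<le> Q x"
  shows "KL S r Q \<le> ereal (- ln C)"
proof -
  have pos: "0 < Q x" if "x \<in> S" "r x \<noteq> 0" for x
    using r0[OF that(1)] dom[OF that(1)] that(2) C by (smt (verit) mult_pos_pos)
  have "(if r x = 0 then 0 else r x * ln (r x / Q x)) \<le> r x * (- ln C)" if x: "x \<in> S" for x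
  proof (cases "r x = 0")
    case False
    with r0[OF x] have "0 < r x"
      by simp
    have "r x / Q x \<le> 1 / C"
      using dom[OF x] C pos[OF x False] \<open>0 < r x\<close> by (simp add: divide_simps mult.commute)
    then have "ln (r x / Q x) \<le> ln (1 / C)"
      using C pos[OF x False] \<open>0 < r x\<close> by (intro ln_mono) auto
    then have "ln (r x / Q x) \<le> - ln C"
      using C by (simp add: ln_div)
    with \<open>0 < r x\<close> False show ?thesis
      using mult_left_mono[of "ln (r x / Q x)" "- ln C" "r x"] by simp
  qed simp
  then have "(\<Sum>x\<in>S. if r x = 0 then 0 else r x * ln (r x / Q x)) \<le> (\<Sum>x\<in>S. r x * (- ln C))"
    by (rule sum_mono)
  also have "\<dots> = (\<Sum>x\<in>S. r x) * (- ln C)"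
    by (rule sum_distrib_right[symmetric])
  finally have "(\<Sum>x\<in>S. if r x = 0 then 0 else r x * ln (r x / Q x)) \<le> (\<Sum>x\<in>S. r x) * (- ln C)" .
  moreover have "\<forall>x\<in>S. Q x = 0 \<longrightarrow> r x = 0"
    using pos by force
  ultimately show ?thesis
    using r1 by (simp add: KL_def)
qed

lemma hyp_min_ge:
  assumes "0 \<le> \<epsilon>"
    and "\<And>a. \<forall>xs. 0 \<le> a xs \<and> a xs \<le> 1 \<Longrightarrow> (\<Sum>xs\<in>strings n. (1 - a xs) * q xs) \<le> \<epsilon>
      \<Longrightarrow> B \<le> (\<Sum>xs\<in>strings n. a xs * r xs)"
  shows "B \<le> hyp_min n \<epsilon> q r"
  unfolding hyp_min_def
proof (rule cInf_greatest)
  show "{(\<Sum>xs\<in>strings n. a xs * r xs) | a. (\<forall>xs. 0 \<le> a xs \<and> a xs \<le> 1)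
      \<and> (\<Sum>xs\<in>strings n. (1 - a xs) * q xs) \<le> \<epsilon>} \<noteq> {}"
    using assms(1) by (auto intro!: exI[of _ "\<lambda>_. 1"])
qed (use assms(2) in blast)

lemma hyp_min_le:
  assumes "\<And>xs. 0 \<le> r xs" and "\<And>xs. 0 \<le> a xs \<and> a xs \<le> 1"
    and "(\<Sum>xs\<in>strings n. (1 - a xs) * q xs) \<le> \<epsilon>"
  shows "hyp_min n \<epsilon> q r \<le> (\<Sum>xs\<in>strings n. a xs * r xs)"
  unfolding hyp_min_def
proof (rule cInf_lower)
  show "bdd_below {(\<Sum>xs\<in>strings n. a xs * r xs) | a. (\<forall>xs. 0 \<le> a xs \<and> a xs \<le> 1)
      \<and> (\<Sum>xs\<in>strings n. (1 - a xs) * q xs) \<le> \<epsilon>}"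
    using assms(1) by (intro bdd_belowI[of _ 0]) (auto intro!: sum_nonneg)
qed (use assms in blast)

lemma neg_log_le: "0 < B \<Longrightarrow> B \<le> v \<Longrightarrow> neg_log v \<le> ereal (- ln B)"
  by (simp add: neg_log_def)

lemma neg_log_ge: "0 < B \<Longrightarrow> v \<le> B \<Longrightarrow> ereal (- ln B) \<le> neg_log v"
  by (simp add: neg_log_def)

section \<open>Achievability\<close>

lemma test_le_tilted:
  fixes a P Q :: real
  assumes a: "0 \<le> a" "a \<le> 1" and P: "0 \<le> P" and Q: "0 \<le> Q" and PQ: "P = 0 \<Longrightarrow> Q = 0"
    and \<gamma>: "\<gamma> > 0" and s: "s > 0"
  shows "a * Q \<le> \<gamma> * (a * P) + \<gamma> powr (- s) * (Q * (Q / P) powr s)"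
proof (cases "Q / P \<le> \<gamma>")
  case True
  have "a * Q = a * P * (Q / P)"
    using PQ by (cases "P = 0") auto
  also have "\<dots> \<le> a * P * \<gamma>"
    using True a P by (intro mult_left_mono) auto
  finally have "a * Q \<le> \<gamma> * (a * P)"
    by (simp add: mult_ac)
  moreover have "0 \<le> \<gamma> powr (- s) * (Q * (Q / P) powr s)"
    using Q by simp
  ultimately show ?thesis
    by linarith
next
  case False
  then have "1 \<le> Q / P / \<gamma>"
    using \<gamma> P by (cases "P = 0") (simp_all add: field_simps)
  then have "1 \<le> (Q / P / \<gamma>) powr s"
    using s by (intro ge_one_powr_ge_zero) auto
  then have "Q \<le> Q * (Q / P / \<gamma>) powr s"
    using Q by (simp add: mult_le_cancel_left1)
  then have "a * Q \<le> Q * (Q / P / \<gamma>) powr s"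
    using a Q by (meson mult_left_le_one_le order_trans)
  also have "(Q / P / \<gamma>) powr s = (Q / P) powr s / \<gamma> powr s"
    using \<gamma> P Q by (metis powr_divide)
  also have "Q * ((Q / P) powr s / \<gamma> powr s) = \<gamma> powr (- s) * (Q * (Q / P) powr s)"
    by (simp add: powr_minus_divide)
  finally have "a * Q \<le> \<gamma> powr (- s) * (Q * (Q / P) powr s)" .
  moreover have "0 \<le> \<gamma> * (a * P)"
    using \<gamma> a P by simp
  ultimately show ?thesis
    by linarith
qed

text \<open>Since \<open>0 powr s = 0\<close>, letters with \<open>r b = 0\<close> contribute nothing, even for \<open>s = 0\<close>.\<close>

definition tilted_moment :: "('a::finite \<Rightarrow> real) \<Rightarrow> ('a \<Rightarrow> real) \<Rightarrow> real \<Rightarrow> real" where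
  "tilted_moment r p s = (\<Sum>b\<in>UNIV. r b * (r b / p b) powr s)"

lemma prod_list_tilted:
  fixes r p :: "'a \<Rightarrow> real"
  assumes r: "\<And>b. 0 \<le> r b" and p: "\<And>b. 0 \<le> p b"
  shows "prod_list (map r xs) * (prod_list (map r xs) / prod_list (map p xs)) powr s
    = prod_list (map (\<lambda>b. r b * (r b / p b) powr s) xs)"
proof (induction xs)
  case (Cons b xs)
  define R P where "R = prod_list (map r xs)" and "P = prod_list (map p xs)"
  have nonneg: "0 \<le> r b / p b" "0 \<le> R / P"
    using r p by (auto simp: R_def P_def intro!: divide_nonneg_nonneg prod_list_nonneg)
  have "prod_list (map r (b # xs)) * (prod_list (map r (b # xs)) / prod_list (map p (b # xs))) powr s
      = r b * R * (r b / p b * (R / P)) powr s"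
    by (simp add: R_def P_def)
  also have "\<dots> = r b * (r b / p b) powr s * (R * (R / P) powr s)"
    using nonneg by (simp only: powr_mult mult_ac)
  also have "\<dots> = prod_list (map (\<lambda>b. r b * (r b / p b) powr s) (b # xs))"
    using Cons by (simp add: R_def P_def)
  finally show ?case .
qed simp

lemma sum_iid_tilted:
  fixes r p :: "'a::finite \<Rightarrow> real"
  assumes "\<And>b. 0 \<le> r b" and "\<And>b. 0 \<le> p b"
  shows "(\<Sum>x\<in>strings n. iid n r x * (iid n r x / iid n p x) powr s) = tilted_moment r p s ^ n"
proof -
  have "(\<Sum>x\<in>strings n. iid n r x * (iid n r x / iid n p x) powr s)
      = (\<Sum>x\<in>strings n. prod_list (map (\<lambda>b. r b * (r b / p b) powr s) x))"
    using assms by (intro sum.cong) (simp_all add: iid_eq_prod_list prod_list_tilted)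
  then show ?thesis
    by (simp add: sum_strings_prod_list tilted_moment_def)
qed

lemma tilted_moment_eq_exp:
  assumes r: "\<And>b. 0 \<le> r b" and p: "\<And>b. 0 \<le> p b" and rp: "abs_cont r p"
  shows "tilted_moment r p s = (\<Sum>b\<in>UNIV. if r b = 0 then 0 else r b * exp (s * ln (r b / p b)))"
  unfolding tilted_moment_def
proof (intro sum.cong refl)
  fix b
  show "r b * (r b / p b) powr s = (if r b = 0 then 0 else r b * exp (s * ln (r b / p b)))"
  proof (cases "r b = 0")
    case False
    then have "0 < r b" and "0 < p b"
      using r[of b] p[of b] rp by (auto simp: abs_cont_def less_le)
    then show ?thesis
      by (simp add: powr_def)
  qed simp
qed

lemma tilted_moment_0:
  assumes r: "is_pdist r" and p: "\<And>b. 0 \<le> p b" and rp: "abs_cont r p"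
  shows "tilted_moment r p 0 = 1"
proof -
  have r0: "\<And>b. 0 \<le> r b"
    using r by (simp add: is_pdist_def)
  have "tilted_moment r p 0 = (\<Sum>b\<in>UNIV. if r b = 0 then 0 else r b)"
    by (simp add: tilted_moment_eq_exp[OF r0 p rp] cong: if_cong)
  also have "\<dots> = (\<Sum>b\<in>UNIV. r b)"
    by (intro sum.cong) auto
  finally show ?thesis
    using r by (simp add: is_pdist_def)
qed

lemma has_derivative_tilted_moment:
  assumes r: "\<And>b. 0 \<le> r b" and p: "\<And>b. 0 \<le> p b" and rp: "abs_cont r p"
  shows "(tilted_moment r p has_real_derivative rel_entropy r p) (at 0)"
proof -
  have "((\<lambda>s. if r b = 0 then 0 else r b * exp (s * ln (r b / p b)))
      has_real_derivative (if r b = 0 then 0 else r b * ln (r b / p b))) (at 0)" for b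
    by (cases "r b = 0") (auto intro!: derivative_eq_intros)
  then have "((\<lambda>s. \<Sum>b\<in>UNIV. if r b = 0 then 0 else r b * exp (s * ln (r b / p b)))
      has_real_derivative rel_entropy r p) (at 0)"
    unfolding rel_entropy_def by (rule DERIV_sum)
  moreover have "tilted_moment r p = (\<lambda>s. \<Sum>b\<in>UNIV. if r b = 0 then 0 else r b * exp (s * ln (r b / p b)))"
    by (intro ext tilted_moment_eq_exp[OF r p rp])
  ultimately show ?thesis
    by (simp only:)
qed

lemma tilted_moment_below_exp:
  assumes r: "is_pdist r" and p: "\<And>b. 0 \<le> p b" and rp: "abs_cont r p" and \<delta>: "\<delta> > 0"
  obtains s where "s > 0" and "tilted_moment r p s < exp (s * (rel_entropy r p + \<delta>))"
proof -
  have r0: "\<And>b. 0 \<le> r b"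
    using r by (simp add: is_pdist_def)
  have "((\<lambda>s. exp (s * (rel_entropy r p + \<delta>))) has_real_derivative rel_entropy r p + \<delta>) (at 0)"
    by (auto intro!: derivative_eq_intros)
  from DERIV_diff[OF has_derivative_tilted_moment[OF r0 p rp] this]
  have "((\<lambda>s. tilted_moment r p s - exp (s * (rel_entropy r p + \<delta>)))
      has_real_derivative rel_entropy r p - (rel_entropy r p + \<delta>)) (at 0)" .
  moreover have "rel_entropy r p - (rel_entropy r p + \<delta>) < 0"
    using \<delta> by simp
  ultimately obtain d where "d > 0" and d: "\<And>h. 0 < h \<Longrightarrow> h < d \<Longrightarrow>
      tilted_moment r p (0 + h) - exp ((0 + h) * (rel_entropy r p + \<delta>))
        < tilted_moment r p 0 - exp (0 * (rel_entropy r p + \<delta>))"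
    by (blast dest: DERIV_neg_dec_right)
  then have "tilted_moment r p (d / 2) < exp (d / 2 * (rel_entropy r p + \<delta>))"
    using d[of "d / 2"] tilted_moment_0[OF r p rp] by simp
  with \<open>d > 0\<close> show ?thesis
    using that[of "d / 2"] by simp
qed

lemma hyp_min_iid_tilted_bound:
  fixes r p :: "'a::finite \<Rightarrow> real"
  assumes r: "is_pdist r" and p: "is_pdist p" and rp: "abs_cont r p"
    and "0 \<le> \<epsilon>" and \<gamma>: "\<gamma> > 0" and s: "s > 0"
  shows "(1 - \<epsilon> - \<gamma> powr (- s) * tilted_moment r p s ^ n) / \<gamma> \<le> hyp_min n \<epsilon> (iid n r) (iid n p)"
proof (rule hyp_min_ge[OF \<open>0 \<le> \<epsilon>\<close>])
  fix a assume a: "\<forall>xs. 0 \<le> a xs \<and> a xs \<le> 1"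
    and err: "(\<Sum>xs\<in>strings n. (1 - a xs) * iid n r xs) \<le> \<epsilon>"
  have r0: "\<And>b. 0 \<le> r b" and p0: "\<And>b. 0 \<le> p b"
    using r p by (simp_all add: is_pdist_def)
  have "(\<Sum>xs\<in>strings n. (1 - a xs) * iid n r xs) = 1 - (\<Sum>xs\<in>strings n. a xs * iid n r xs)"
    using sum_iid[OF r, of n] by (simp add: left_diff_distrib sum_subtractf)
  then have "1 - \<epsilon> \<le> (\<Sum>xs\<in>strings n. a xs * iid n r xs)"
    using err by simp
  also have "\<dots> \<le> (\<Sum>xs\<in>strings n. \<gamma> * (a xs * iid n p xs)
      + \<gamma> powr (- s) * (iid n r xs * (iid n r xs / iid n p xs) powr s))"
    using a \<gamma> s iid_nonneg[OF r] iid_nonneg[OF p] iid_abs_cont[OF rp]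
    by (intro sum_mono test_le_tilted) auto
  also have "\<dots> = \<gamma> * (\<Sum>xs\<in>strings n. a xs * iid n p xs) + \<gamma> powr (- s) * tilted_moment r p s ^ n"
    by (simp add: sum.distrib sum_distrib_left sum_iid_tilted[OF r0 p0, symmetric])
  finally show "(1 - \<epsilon> - \<gamma> powr (- s) * tilted_moment r p s ^ n) / \<gamma>
      \<le> (\<Sum>xs\<in>strings n. a xs * iid n p xs)"
    using \<gamma> by (simp add: divide_le_eq algebra_simps)
qed

lemma hyp_min_iid_ge:
  fixes r p :: "'a::finite \<Rightarrow> real"
  assumes r: "is_pdist r" and p: "is_pdist p" and rp: "abs_cont r p"
    and \<epsilon>: "0 < \<epsilon>" "\<epsilon> < 1" and \<delta>: "\<delta> > 0"
  shows "\<forall>\<^sub>F n in sequentially.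
    exp (- (real n * (rel_entropy r p + \<delta>))) * ((1 - \<epsilon>) / 2) \<le> hyp_min n \<epsilon> (iid n r) (iid n p)"
proof -
  define D where "D = rel_entropy r p"
  have p0: "\<And>b. 0 \<le> p b"
    using p by (simp add: is_pdist_def)
  obtain s where s: "s > 0" and less: "tilted_moment r p s < exp (s * (D + \<delta>))"
    using tilted_moment_below_exp[OF r p0 rp \<delta>] unfolding D_def by blast
  define \<theta> where "\<theta> = tilted_moment r p s * exp (- (s * (D + \<delta>)))"
  have "0 \<le> tilted_moment r p s"
    using r p0 by (auto simp: tilted_moment_def is_pdist_def intro!: sum_nonneg)
  moreover have "\<theta> = tilted_moment r p s / exp (s * (D + \<delta>))"
    by (simp add: \<theta>_def exp_minus divide_inverse)
  ultimately have "0 \<le> \<theta>" and "\<theta> < 1"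
    using less by simp_all
  then have "(\<lambda>n. \<theta> ^ n) \<longlonglongrightarrow> 0"
    by (intro LIMSEQ_power_zero) auto
  then have "\<forall>\<^sub>F n in sequentially. \<theta> ^ n < (1 - \<epsilon>) / 2"
    using \<epsilon> by (intro order_tendstoD) auto
  then show ?thesis
    unfolding D_def[symmetric]
  proof eventually_elim
    case (elim n)
    define \<gamma> where "\<gamma> = exp (real n * (D + \<delta>))"
    have "\<gamma> powr (- s) = exp (- (s * (D + \<delta>))) ^ n"
      unfolding \<gamma>_def powr_def exp_of_nat_mult[symmetric] by (simp add: algebra_simps)
    then have "\<gamma> powr (- s) * tilted_moment r p s ^ n = \<theta> ^ n"
      by (simp add: \<theta>_def power_mult_distrib mult.commute)
    with elim have bound: "(1 - \<epsilon>) / 2 \<le> 1 - \<epsilon> - \<gamma> powr (- s) * tilted_moment r p s ^ n"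
      by simp
    have "exp (- y) * c = c / exp y" for y c :: real
      by (simp add: exp_minus divide_inverse)
    then have "exp (- (real n * (D + \<delta>))) * ((1 - \<epsilon>) / 2) = (1 - \<epsilon>) / 2 / \<gamma>"
      unfolding \<gamma>_def .
    also have "\<dots> \<le> (1 - \<epsilon> - \<gamma> powr (- s) * tilted_moment r p s ^ n) / \<gamma>"
      using bound by (rule divide_right_mono) (simp add: \<gamma>_def)
    also have "\<dots> \<le> hyp_min n \<epsilon> (iid n r) (iid n p)"
      using \<epsilon> s by (intro hyp_min_iid_tilted_bound[OF r p rp]) (simp_all add: \<gamma>_def)
    finally show ?case .
  qed
qed

lemma DH_iid_le:
  fixes r p :: "'a::finite \<Rightarrow> real"
  assumes r: "is_pdist r" and p: "is_pdist p" and rp: "abs_cont r p"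
    and \<epsilon>: "0 < \<epsilon>" "\<epsilon> < 1" and \<delta>: "\<delta> > 0"
  shows "\<forall>\<^sub>F n in sequentially.
    DH n \<epsilon> (iid n r) (iid n p) \<le> ereal (real n * (rel_entropy r p + \<delta>) - ln ((1 - \<epsilon>) / 2))"
  using hyp_min_iid_ge[OF assms]
proof eventually_elim
  case (elim n)
  define B where "B = exp (- (real n * (rel_entropy r p + \<delta>))) * ((1 - \<epsilon>) / 2)"
  have "0 < B"
    using \<epsilon> by (simp add: B_def)
  moreover have "- ln B = real n * (rel_entropy r p + \<delta>) - ln ((1 - \<epsilon>) / 2)"
    using \<epsilon> unfolding B_def by (subst ln_mult) auto
  ultimately show ?case
    using neg_log_le[of B] elim by (simp add: DH_def B_def)
qed

lemma DH_iid_rate_eventually_less: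
  fixes r p :: "'a::finite \<Rightarrow> real"
  assumes r: "is_pdist r" and p: "is_pdist p" and rp: "abs_cont r p"
    and \<epsilon>: "0 < \<epsilon>" "\<epsilon> < 1" and w: "rel_entropy r p < w"
  shows "\<forall>\<^sub>F n in sequentially. DH n \<epsilon> (iid n r) (iid n p) / ereal (real n) < ereal w"
proof -
  define \<delta> where "\<delta> = (w - rel_entropy r p) / 2"
  have \<delta>: "\<delta> > 0"
    using w by (simp add: \<delta>_def)
  have "(\<lambda>n. - ln ((1 - \<epsilon>) / 2) / real n) \<longlonglongrightarrow> 0"
    by (rule lim_const_over_n)
  then have "\<forall>\<^sub>F n in sequentially. - ln ((1 - \<epsilon>) / 2) / real n < \<delta>"
    using \<delta> by (intro order_tendstoD) auto
  with DH_iid_le[OF r p rp \<epsilon> \<delta>] eventually_ge_at_top[of 1]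
  show ?thesis
  proof eventually_elim
    case (elim n)
    then have "DH n \<epsilon> (iid n r) (iid n p) / ereal (real n)
        \<le> ereal (real n * (rel_entropy r p + \<delta>) - ln ((1 - \<epsilon>) / 2)) / ereal (real n)"
      by (intro ereal_divide_right_mono) auto
    also have "\<dots> = ereal (rel_entropy r p + \<delta> + - ln ((1 - \<epsilon>) / 2) / real n)"
      using elim(2) by (simp add: field_simps)
    also have "\<dots> < ereal (rel_entropy r p + \<delta> + \<delta>)"
      using elim(3) by simp
    also have "\<dots> = ereal w"
      by (simp add: \<delta>_def)
    finally show ?case .
  qed
qed

locale dist_family =
  fixes F :: "nat \<Rightarrow> ('a::finite list \<Rightarrow> real) set"
  assumes dist: "\<And>n q. n \<ge> 1 \<Longrightarrow> q \<in> F n \<Longrightarrow> is_dist n q"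

locale tensor_family = dist_family +
  assumes tens: "\<And>n m q q'. n \<ge> 1 \<Longrightarrow> m \<ge> 1 \<Longrightarrow> q \<in> F n \<Longrightarrow> q' \<in> F m
    \<Longrightarrow> tensor n m q q' \<in> F (n + m)"
begin

lemma iid_mem:
  assumes "iid 1 r \<in> F 1" and "n \<ge> 1"
  shows "iid n r \<in> F n"
  using \<open>n \<ge> 1\<close>
proof (induction n rule: dec_induct)
  case (step n)
  then show ?case
    using tens[OF step(1) _ step(3) assms(1)] iid_Suc_eq_tensor[of n r] by simp
qed (fact assms(1))

lemma DH_rate_eventually_less:
  assumes p: "is_pdist p" and \<epsilon>: "0 < \<epsilon>" "\<epsilon> < 1" and u: "D_F F p < u"
  shows "\<forall>\<^sub>F n in sequentially. DH_set n \<epsilon> (F n) (iid n p) / ereal (real n) < u"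
proof -
  obtain q where q: "q \<in> F 1" and qu: "KL (strings 1) q (iid 1 p) < u"
    using u by (auto simp: D_F_def INF_less_iff)
  define r where "r b = q [b]" for b
  have "is_dist 1 q"
    using dist q by simp
  then have r: "is_pdist r" and qr: "iid 1 r = q"
    unfolding r_def by (rule is_pdist_of_dist_1, rule iid_1_of_dist_1)
  have rp: "abs_cont r p" and "ereal (rel_entropy r p) < u"
    using qu unfolding qr[symmetric] KL_iid_1 by (auto split: if_splits)
  then obtain w where "ereal (rel_entropy r p) < ereal w" and "ereal w < u"
    using ereal_dense2 by blast
  then have "rel_entropy r p < w"
    by simp
  from DH_iid_rate_eventually_less[OF r p rp \<epsilon> this] eventually_ge_at_top[of 1]
  show ?thesis
  proof eventually_elim
    case (elim n)
    have "iid n r \<in> F n"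
      using iid_mem[of r n] q qr elim(2) by simp
    then have "DH_set n \<epsilon> (F n) (iid n p) \<le> DH n \<epsilon> (iid n r) (iid n p)"
      unfolding DH_set_def by (rule INF_lower)
    then have "DH_set n \<epsilon> (F n) (iid n p) / ereal (real n)
        \<le> DH n \<epsilon> (iid n r) (iid n p) / ereal (real n)"
      using elim(2) by (intro ereal_divide_right_mono) auto
    also have "\<dots> < ereal w"
      by (fact elim(1))
    finally show ?case
      using \<open>ereal w < u\<close> by simp
  qed
qed

end

section \<open>Method of types\<close>

definition empirical :: "'a list \<Rightarrow> 'a \<Rightarrow> real" where
  "empirical x b = real (count_list x b) / real (length x)"

lemma is_pdist_empirical:
  fixes x :: "'a::finite list"
  assumes "x \<noteq> []"
  shows "is_pdist (empirical x)"
proof -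
  have "(\<Sum>b\<in>UNIV. real (count_list x b)) = real (length x)"
    using sum_count_set[of x UNIV] by (simp flip: of_nat_sum)
  then show ?thesis
    using assms by (simp add: is_pdist_def empirical_def flip: sum_divide_distrib)
qed

lemma empirical_permute_list:
  assumes "\<sigma> permutes {..<length x}"
  shows "empirical (permute_list \<sigma> x) = empirical x"
  using mset_permute_list[OF assms] by (simp add: empirical_def fun_eq_iff flip: count_mset)

lemma prod_list_eq_prod_count:
  fixes p :: "'a::finite \<Rightarrow> 'b::comm_monoid_mult"
  shows "prod_list (map p xs) = (\<Prod>b\<in>UNIV. p b ^ count_list xs b)"
proof (induction xs)
  case (Cons a xs)
  have "(\<Prod>b\<in>UNIV. p b ^ count_list (a # xs) b)
      = (\<Prod>b\<in>UNIV. (if b = a then p b else 1) * p b ^ count_list xs b)"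
    by (intro prod.cong) auto
  then show ?case
    by (simp add: Cons prod.distrib)
qed simp

lemma iid_eq_exp_rel_entropy:
  assumes x: "length x = n" "n \<ge> 1" and p: "\<And>b. 0 \<le> p b" and tp: "abs_cont (empirical x) p"
  shows "iid n p x = iid n (empirical x) x * exp (- (real n * rel_entropy (empirical x) p))"
proof -
  define t where "t = empirical x"
  define L where "L b = (if t b = 0 then 0 else ln (t b / p b))" for b
  have count: "real (count_list x b) = real n * t b" for b
    using x by (simp add: t_def empirical_def)
  have "p b ^ count_list x b = t b ^ count_list x b * exp (- (real (count_list x b) * L b))" for b
  proof (cases "t b = 0")
    case False
    have "0 \<le> t b"
      by (simp add: t_def empirical_def)
    with False have "0 < t b"
      by simp
    from False tp have "p b \<noteq> 0"
      by (auto simp: abs_cont_def t_def)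
    with p[of b] have "0 < p b"
      by simp
    have "exp (- (real (count_list x b) * L b)) = exp (- L b) ^ count_list x b"
      by (simp add: exp_of_nat_mult[symmetric])
    also have "exp (- L b) = p b / t b"
      using \<open>0 < t b\<close> \<open>0 < p b\<close> False by (simp add: L_def exp_minus)
    finally show ?thesis
      using \<open>0 < t b\<close> by (simp add: power_divide)
  qed (use count[of b] x in simp)
  note power_eq = this
  have "(\<Sum>b\<in>UNIV. real (count_list x b) * L b)
      = (\<Sum>b\<in>UNIV. real n * (if t b = 0 then 0 else t b * ln (t b / p b)))"
    by (intro sum.cong refl) (simp add: L_def count)
  also have "\<dots> = real n * rel_entropy t p"
    by (simp add: rel_entropy_def sum_distrib_left)
  finally have sum_eq: "(\<Sum>b\<in>UNIV. real (count_list x b) * L b) = real n * rel_entropy t p" .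
  have "iid n p x = iid n t x * exp (\<Sum>b\<in>UNIV. - (real (count_list x b) * L b))"
    using x by (simp add: power_eq iid_eq_prod_list prod_list_eq_prod_count prod.distrib exp_sum)
  also have "(\<Sum>b\<in>UNIV. - (real (count_list x b) * L b)) = - (real n * rel_entropy t p)"
    using sum_eq by (simp add: sum_negf)
  finally show ?thesis
    by (simp add: t_def)
qed

definition KL_sublevel :: "('a::finite \<Rightarrow> real) \<Rightarrow> real \<Rightarrow> ('a \<Rightarrow> real) set" where
  "KL_sublevel p c = {t. is_pdist t \<and> abs_cont t p \<and> rel_entropy t p \<le> c}"

lemma iid_le_of_empirical_notin_KL_sublevel:
  assumes p: "is_pdist p" and x: "length x = n" "n \<ge> 1" and "empirical x \<notin> KL_sublevel p c"
  shows "iid n p x \<le> exp (- (real n * c)) * iid n (empirical x) x"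
proof -
  have t: "is_pdist (empirical x)"
    using x by (intro is_pdist_empirical) auto
  have p0: "\<And>b. 0 \<le> p b"
    using p by (simp add: is_pdist_def)
  show ?thesis
  proof (cases "abs_cont (empirical x) p")
    case True
    with assms t have "c < rel_entropy (empirical x) p"
      by (simp add: KL_sublevel_def)
    then have "exp (- (real n * rel_entropy (empirical x) p)) \<le> exp (- (real n * c))"
      using x by simp
    have "iid n p x = iid n (empirical x) x * exp (- (real n * rel_entropy (empirical x) p))"
      by (rule iid_eq_exp_rel_entropy[OF x p0 True])
    also have "\<dots> \<le> iid n (empirical x) x * exp (- (real n * c))"
      using \<open>exp _ \<le> exp _\<close> iid_nonneg[OF t] by (rule mult_left_mono)
    finally show ?thesis
      by (simp only: mult.commute)
  next
    case False
    then obtain b where "p b = 0" and "empirical x b \<noteq> 0"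
      by (auto simp: abs_cont_def)
    then have "b \<in> set x"
      by (auto simp: empirical_def count_list_0_iff)
    with \<open>p b = 0\<close> have "0 \<in> set (map p x)"
      by (metis image_eqI set_map)
    then have "iid n p x = 0"
      using x by (simp add: iid_eq_prod_list prod_list_zero_iff)
    then show ?thesis
      using iid_nonneg[OF t] by simp
  qed
qed

lemma sum_iid_empirical_le:
  assumes "n \<ge> 1"
  shows "(\<Sum>x\<in>strings n. iid n (empirical x) (x :: 'a::finite list)) \<le> real (n + 1) ^ CARD('a)"
proof -
  define cnt where "cnt x = count_list x" for x :: "'a list"
  have "(\<Sum>x\<in>strings n. iid n (empirical x) (x :: 'a list))
      = (\<Sum>v\<in>cnt ` strings n. \<Sum>x\<in>{x \<in> strings n. cnt x = v}. iid n (empirical x) x)"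
    by (rule sum.image_gen[OF finite_strings])
  also have "\<dots> \<le> (\<Sum>v\<in>cnt ` strings n. 1)"
  proof (rule sum_mono)
    fix v assume "v \<in> cnt ` strings n"
    then obtain x0 where x0: "length x0 = n" "v = cnt x0"
      by auto
    then have t: "is_pdist (empirical x0)"
      using assms by (intro is_pdist_empirical) auto
    have "(\<Sum>x\<in>{x \<in> strings n. cnt x = v}. iid n (empirical x) x)
        = (\<Sum>x\<in>{x \<in> strings n. cnt x = v}. iid n (empirical x0) x)"
      using x0 by (intro sum.cong) (auto simp: cnt_def empirical_def[abs_def])
    also have "\<dots> \<le> (\<Sum>x\<in>strings n. iid n (empirical x0) x)"
      using iid_nonneg[OF t] by (intro sum_mono2) auto
    finally show "(\<Sum>x\<in>{x \<in> strings n. cnt x = v}. iid n (empirical x) x) \<le> 1"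
      using sum_iid[OF t] by simp
  qed
  also have "\<dots> = real (card (cnt ` strings n))"
    by simp
  also have "\<dots> \<le> real (n + 1) ^ CARD('a)"
  proof -
    have "card (cnt ` strings n) \<le> card (PiE UNIV (\<lambda>_::'a. {..n}))"
      by (intro card_mono finite_PiE) (auto simp: cnt_def PiE_def count_le_length)
    then have "card (cnt ` strings n) \<le> (n + 1) ^ CARD('a)"
      by (simp add: card_PiE)
    then have "real (card (cnt ` strings n)) \<le> real ((n + 1) ^ CARD('a))"
      by (rule of_nat_mono)
    then show ?thesis
      by simp
  qed
  finally show ?thesis .
qed

lemma sum_iid_outside_KL_sublevel:
  fixes p :: "'a::finite \<Rightarrow> real"
  assumes p: "is_pdist p" and n: "n \<ge> 1"
  shows "(\<Sum>x\<in>strings n. (if empirical x \<in> KL_sublevel p c then 0 else 1) * iid n p x)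
    \<le> real (n + 1) ^ CARD('a) * exp (- (real n * c))"
proof -
  have "(\<Sum>x\<in>strings n. (if empirical x \<in> KL_sublevel p c then 0 else 1) * iid n p x)
      \<le> (\<Sum>x\<in>strings n. exp (- (real n * c)) * iid n (empirical x) (x :: 'a list))"
  proof (rule sum_mono)
    fix x :: "'a list" assume "x \<in> strings n"
    then have x: "length x = n"
      by simp
    have t: "is_pdist (empirical x)"
      using n x by (intro is_pdist_empirical) auto
    show "(if empirical x \<in> KL_sublevel p c then 0 else 1) * iid n p x
        \<le> exp (- (real n * c)) * iid n (empirical x) x"
      using iid_le_of_empirical_notin_KL_sublevel[OF p x n] iid_nonneg[OF t] by auto
  qed
  also have "\<dots> \<le> exp (- (real n * c)) * real (n + 1) ^ CARD('a)"
    using sum_iid_empirical_le[OF n] by (simp add: sum_distrib_left[symmetric])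
  finally show ?thesis
    by (simp add: mult.commute)
qed

lemma DH_set_ge_of_mass_le:
  fixes p :: "'a::finite \<Rightarrow> real" and Fn :: "('a list \<Rightarrow> real) set"
  assumes p: "is_pdist p" and n: "n \<ge> 1"
    and mass: "\<And>q. q \<in> Fn \<Longrightarrow> (\<Sum>x\<in>strings n. if empirical x \<in> KL_sublevel p c then q x else 0) \<le> \<epsilon>"
  shows "ereal (real n * c - real CARD('a) * ln (real n + 1)) \<le> DH_set n \<epsilon> Fn (iid n p)"
  unfolding DH_set_def
proof (rule INF_greatest)
  fix q assume "q \<in> Fn"
  define B where "B = real (n + 1) ^ CARD('a) * exp (- (real n * c))"
  define a where "a x = (if empirical x \<in> KL_sublevel p c then 0 else 1 :: real)" for x :: "'a list"
  have "(\<Sum>x\<in>strings n. (1 - a x) * q x)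
      = (\<Sum>x\<in>strings n. if empirical x \<in> KL_sublevel p c then q x else 0)"
    by (intro sum.cong) (simp_all add: a_def)
  also have "\<dots> \<le> \<epsilon>"
    using mass[OF \<open>q \<in> Fn\<close>] .
  finally have "hyp_min n \<epsilon> q (iid n p) \<le> (\<Sum>x\<in>strings n. a x * iid n p x)"
    using iid_nonneg[OF p] by (intro hyp_min_le) (auto simp: a_def)
  also have "\<dots> \<le> B"
    using sum_iid_outside_KL_sublevel[OF p n, of c] by (simp add: a_def B_def)
  finally have "ereal (- ln B) \<le> DH n \<epsilon> q (iid n p)"
    unfolding DH_def by (intro neg_log_ge) (simp_all add: B_def)
  moreover have "- ln B = real n * c - real CARD('a) * ln (real n + 1)"
    by (simp add: B_def ln_mult ln_realpow add.commute)
  ultimately show "ereal (real n * c - real CARD('a) * ln (real n + 1)) \<le> DH n \<epsilon> q (iid n p)"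
    by simp
qed

lemma isCont_x_ln_x: "isCont (\<lambda>y::real. y * ln y) y0"
proof (cases "y0 = 0")
  case True
  have right: "((\<lambda>y::real. y * ln y) \<longlongrightarrow> 0) (at_right 0)"
    by real_asymp
  then have "((\<lambda>y::real. y * ln y) \<longlongrightarrow> 0) (at_left 0)"
    using tendsto_minus[OF right] by (simp add: filterlim_at_left_to_right ln_minus)
  with right have "((\<lambda>y::real. y * ln y) \<longlongrightarrow> 0) (at 0)"
    by (rule filterlim_split_at[rotated])
  with True show ?thesis
    by (simp add: isCont_def)
qed (intro continuous_intros, auto)

lemma rel_entropy_eq_sum_x_ln_x:
  assumes t: "\<And>b. 0 \<le> t b" and p: "\<And>b. 0 \<le> p b" and tp: "abs_cont t p"
  shows "rel_entropy t p = (\<Sum>b\<in>{b. p b \<noteq> 0}. t b * ln (t b) - t b * ln (p b))"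
proof -
  have "rel_entropy t p = (\<Sum>b\<in>{b. p b \<noteq> 0}. if t b = 0 then 0 else t b * ln (t b / p b))"
    unfolding rel_entropy_def using tp by (intro sum.mono_neutral_right) (auto simp: abs_cont_def)
  also have "\<dots> = (\<Sum>b\<in>{b. p b \<noteq> 0}. t b * ln (t b) - t b * ln (p b))"
    using t p by (intro sum.cong refl) (auto simp: ln_div less_le right_diff_distrib)
  finally show ?thesis .
qed

lemma compact_unit_box: "compact {t :: 'a::finite \<Rightarrow> real. \<forall>b. t b \<in> {0..1}}"
proof -
  have "compactin (product_topology (\<lambda>_. euclideanreal) UNIV) (PiE UNIV (\<lambda>_::'a. {0..1::real}))"
    by (simp add: compactin_PiE)
  then show ?thesis
    by (simp add: PiE_UNIV_domain euclidean_product_topology Pi_def)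
qed

lemma compact_KL_sublevel:
  fixes p :: "'a::finite \<Rightarrow> real"
  assumes p: "is_pdist p"
  shows "compact (KL_sublevel p c)"
proof -
  define \<psi> where "\<psi> t = (\<Sum>b\<in>{b. p b \<noteq> 0}. t b * ln (t b) - t b * ln (p b))" for t :: "'a \<Rightarrow> real"
  have p0: "\<And>b. 0 \<le> p b"
    using p by (simp add: is_pdist_def)
  have le_1: "t b \<le> 1" if "is_pdist t" for t :: "'a \<Rightarrow> real" and b
    using that member_le_sum[of b UNIV t] by (simp add: is_pdist_def)
  have "rel_entropy t p = \<psi> t" if "is_pdist t" and "abs_cont t p" for t
    using that rel_entropy_eq_sum_x_ln_x[OF _ p0, of t] by (simp add: is_pdist_def \<psi>_def)
  then have "KL_sublevel p c = {t. is_pdist t \<and> abs_cont t p \<and> \<psi> t \<le> c}"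
    by (auto simp: KL_sublevel_def)
  also have "\<dots> = {t. \<forall>b. t b \<in> {0..1}} \<inter> {t. \<forall>b. 0 \<le> t b} \<inter> {t. (\<Sum>b\<in>UNIV. t b) = 1}
      \<inter> {t. \<forall>b. p b = 0 \<longrightarrow> t b = 0} \<inter> {t. \<psi> t \<le> c}"
    using le_1 by (auto simp: is_pdist_def abs_cont_def)
  finally have eq: "KL_sublevel p c = \<dots>" .
  have "continuous_on UNIV (\<lambda>y::real. y * ln y)"
    using isCont_x_ln_x by (simp add: continuous_on_eq_continuous_at)
  then have x_ln_x: "continuous_on UNIV (\<lambda>t::'a \<Rightarrow> real. t b * ln (t b))" for b
    by (rule continuous_on_compose2[of UNIV _ UNIV "\<lambda>t. t b"]) auto
  have "continuous_on UNIV \<psi>"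
    unfolding \<psi>_def by (intro continuous_on_sum continuous_on_diff x_ln_x continuous_on_mult_right) simp_all
  then have closed_\<psi>: "closed {t. \<psi> t \<le> c}"
    by (intro closed_Collect_le continuous_on_const)
  have closed_supp: "closed {t::'a \<Rightarrow> real. \<forall>b. p b = 0 \<longrightarrow> t b = 0}"
  proof (intro closed_Collect_all)
    show "closed {t::'a \<Rightarrow> real. p b = 0 \<longrightarrow> t b = 0}" for b
      by (cases "p b = 0") (simp_all add: closed_Collect_eq)
  qed
  show ?thesis
    unfolding eq
    by (intro compact_Int_closed closed_Int compact_unit_box closed_\<psi> closed_supp closed_Collect_all
        closed_Collect_le closed_Collect_eq continuous_intros continuous_on_product_coordinates)
qed

lemma iid_1_notin_of_KL_sublevel:
  assumes "ereal c < D_F F p" and "t \<in> KL_sublevel p c"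
  shows "iid 1 t \<notin> F 1"
proof
  assume "iid 1 t \<in> F 1"
  then have "D_F F p \<le> KL (strings 1) (iid 1 t) (iid 1 p)"
    unfolding D_F_def by (rule INF_lower)
  also have "\<dots> \<le> ereal c"
    unfolding KL_iid_1 using assms(2) by (simp add: KL_sublevel_def)
  finally show False
    using assms(1) by simp
qed

section \<open>Symmetric families\<close>

definition perm_invariant :: "nat \<Rightarrow> ('a list \<Rightarrow> real) \<Rightarrow> bool" where
  "perm_invariant n f \<longleftrightarrow>
    (\<forall>w \<sigma>. length w = n \<longrightarrow> \<sigma> permutes {..<n} \<longrightarrow> f (permute_list \<sigma> w) = f w)"

lemma sum_strings_permute_list:
  fixes g :: "'a::finite list \<Rightarrow> 'b::comm_monoid_add"
  assumes \<sigma>: "\<sigma> permutes {..<n}"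
  shows "(\<Sum>x\<in>strings n. g (permute_list \<sigma> x)) = (\<Sum>x\<in>strings n. g x)"
proof (rule sum.reindex_bij_witness[where i = "permute_list (inv \<sigma>)" and j = "permute_list \<sigma>"])
  have inv: "inv \<sigma> permutes {..<n}"
    using \<sigma> by (rule permutes_inv)
  fix x assume "x \<in> strings n"
  then show "permute_list (inv \<sigma>) (permute_list \<sigma> x) = x"
    and "permute_list \<sigma> (permute_list (inv \<sigma>) x) = x"
    using \<sigma> inv by (simp_all add: permute_list_compose[symmetric] permutes_inv_o)
qed auto

definition symmetrize :: "nat \<Rightarrow> ('a list \<Rightarrow> real) \<Rightarrow> 'a list \<Rightarrow> real" where
  "symmetrize n q x = (\<Sum>\<sigma>\<in>{\<sigma>. \<sigma> permutes {..<n}}. q (permute_list \<sigma> x)) / fact n"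

lemma perm_invariant_symmetrize: "perm_invariant n (symmetrize n q)"
  unfolding perm_invariant_def
proof (intro allI impI)
  fix w :: "'a list" and \<tau> assume w: "length w = n" and \<tau>: "\<tau> permutes {..<n}"
  have "(\<Sum>\<sigma>\<in>{\<sigma>. \<sigma> permutes {..<n}}. q (permute_list \<sigma> (permute_list \<tau> w)))
      = (\<Sum>\<sigma>\<in>{\<sigma>. \<sigma> permutes {..<n}}. q (permute_list (\<tau> \<circ> \<sigma>) w))"
    using w by (intro sum.cong) (simp_all add: permute_list_compose)
  also have "\<dots> = (\<Sum>\<sigma>\<in>{\<sigma>. \<sigma> permutes {..<n}}. q (permute_list \<sigma> w))"
    using setum_permutations_compose_left[OF \<tau>, of "\<lambda>\<sigma>. q (permute_list \<sigma> w)"] by (simp add: comp_def)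
  finally show "symmetrize n q (permute_list \<tau> w) = symmetrize n q w"
    by (simp add: symmetrize_def)
qed

lemma sum_mult_symmetrize:
  fixes q h :: "'a::finite list \<Rightarrow> real"
  assumes "perm_invariant n h"
  shows "(\<Sum>x\<in>strings n. h x * symmetrize n q x) = (\<Sum>x\<in>strings n. h x * q x)"
proof -
  have "(\<Sum>x\<in>strings n. h x * q (permute_list \<sigma> x)) = (\<Sum>x\<in>strings n. h x * q x)"
    if \<sigma>: "\<sigma> permutes {..<n}" for \<sigma>
  proof -
    have "(\<Sum>x\<in>strings n. h x * q (permute_list \<sigma> x))
        = (\<Sum>x\<in>strings n. h (permute_list \<sigma> x) * q (permute_list \<sigma> x))"
      using assms \<sigma> by (intro sum.cong) (simp_all add: perm_invariant_def)
    also have "\<dots> = (\<Sum>x\<in>strings n. h x * q x)"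
      by (rule sum_strings_permute_list[OF \<sigma>])
    finally show ?thesis .
  qed
  note invariant = this
  have "(\<Sum>x\<in>strings n. h x * symmetrize n q x)
      = (\<Sum>x\<in>strings n. \<Sum>\<sigma>\<in>{\<sigma>. \<sigma> permutes {..<n}}. h x * q (permute_list \<sigma> x)) / fact n"
    by (simp add: symmetrize_def sum_divide_distrib sum_distrib_left)
  also have "\<dots> = (\<Sum>\<sigma>\<in>{\<sigma>. \<sigma> permutes {..<n}}. \<Sum>x\<in>strings n. h x * q (permute_list \<sigma> x)) / fact n"
    by (subst sum.swap) (rule refl)
  also have "\<dots> = (\<Sum>\<sigma>\<in>{\<sigma>. \<sigma> permutes {..<n}}. \<Sum>x\<in>strings n. h x * q x) / fact n"
    using invariant by simp
  also have "\<dots> = (\<Sum>x\<in>strings n. h x * q x)"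
    using card_permutations[of "{..<n}" n] by simp
  finally show ?thesis .
qed

definition prefix_marginal :: "nat \<Rightarrow> nat \<Rightarrow> ('a::finite list \<Rightarrow> real) \<Rightarrow> 'a list \<Rightarrow> real" where
  "prefix_marginal n k q y = (if length y = k then \<Sum>z\<in>strings (n - k). q (y @ z) else 0)"

lemma marginal_prefix_marginal:
  assumes "k < n"
  shows "marginal k (prefix_marginal n (Suc k) q) = prefix_marginal n k q"
proof
  fix y :: "'a list"
  have "n - k = Suc (n - Suc k)"
    using assms by simp
  then show "marginal k (prefix_marginal n (Suc k) q) y = prefix_marginal n k q y"
    by (simp add: marginal_def prefix_marginal_def sum_strings_Suc)
qed

lemma permute_list_transpose_append:
  assumes "length y = j" and "i < length z"
  shows "permute_list (Transposition.transpose j (j + i)) (y @ z)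
    = y @ permute_list (Transposition.transpose 0 i) z"
proof (rule nth_equalityI)
  fix l assume "l < length (permute_list (Transposition.transpose j (j + i)) (y @ z))"
  then have l: "l < length y + length z"
    by simp
  show "permute_list (Transposition.transpose j (j + i)) (y @ z) ! l
      = (y @ permute_list (Transposition.transpose 0 i) z) ! l"
  proof (cases "l < j")
    case False
    then obtain l' where l': "l = j + l'"
      by (metis le_iff_add not_less)
    have "Transposition.transpose j (j + i) (j + l') = j + Transposition.transpose 0 i l'"
      by (cases "l' = 0"; cases "l' = i") (auto simp: transpose_def)
    moreover have "Transposition.transpose 0 i l' < length z"
      using assms l l' by (cases "l' = 0"; cases "l' = i") (auto simp: transpose_def)
    ultimately show ?thesis
      using assms l l' by (simp add: permute_list_def nth_append)
  qed (use assms l in \<open>simp add: permute_list_def nth_append transpose_def\<close>)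
qed simp

lemma count_list_eq_sum_nth: "real (count_list z b) = (\<Sum>i<length z. if z ! i = b then 1 else 0)"
  by (induction z rule: rev_induct) (simp_all add: nth_append)

lemma sum_nth_perm_invariant:
  fixes f :: "'a::finite list \<Rightarrow> real"
  assumes f: "perm_invariant n f" and y: "length y = j" and i: "i < n - j"
  shows "(\<Sum>z\<in>strings (n - j). if z ! i = b then f (y @ z) else 0)
    = (\<Sum>z\<in>strings (n - j). if z ! 0 = b then f (y @ z) else 0)"
proof -
  define \<tau> where "\<tau> = Transposition.transpose (0::nat) i"
  have \<tau>: "\<tau> permutes {..<n - j}"
    unfolding \<tau>_def using i by (intro permutes_swap_id) auto
  have swap: "Transposition.transpose j (j + i) permutes {..<n}"
    using i by (intro permutes_swap_id) auto
  have "(if permute_list \<tau> z ! i = b then f (y @ permute_list \<tau> z) else 0)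
      = (if z ! 0 = b then f (y @ z) else 0)" if z: "length z = n - j" for z
  proof -
    have "permute_list \<tau> z ! i = z ! 0"
      using z i \<tau> by (simp add: permute_list_nth \<tau>_def)
    moreover have "y @ permute_list \<tau> z = permute_list (Transposition.transpose j (j + i)) (y @ z)"
      unfolding \<tau>_def using permute_list_transpose_append[OF y, of i z] z i by simp
    ultimately show ?thesis
      using f swap y z i by (simp add: perm_invariant_def)
  qed
  then show ?thesis
    using sum_strings_permute_list[OF \<tau>, of "\<lambda>z. if z ! i = b then f (y @ z) else 0"] by simp
qed

lemma sum_count_perm_invariant:
  fixes f :: "'a::finite list \<Rightarrow> real"
  assumes f: "perm_invariant n f" and y: "length y = j" and "j < n"
  shows "(\<Sum>z\<in>strings (n - j). f (y @ z) * real (count_list z b))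
    = real (n - j) * (\<Sum>z\<in>strings (n - j - 1). f (y @ b # z))"
proof -
  have "(\<Sum>z\<in>strings (n - j). f (y @ z) * real (count_list z b))
      = (\<Sum>z\<in>strings (n - j). \<Sum>i<n - j. if z ! i = b then f (y @ z) else 0)"
    by (intro sum.cong refl) (simp add: count_list_eq_sum_nth sum_distrib_left if_distrib cong: if_cong)
  also have "\<dots> = (\<Sum>i<n - j. \<Sum>z\<in>strings (n - j). if z ! i = b then f (y @ z) else 0)"
    by (rule sum.swap)
  also have "\<dots> = (\<Sum>i<n - j. \<Sum>z\<in>strings (n - j). if z ! 0 = b then f (y @ z) else 0)"
  proof (rule sum.cong[OF refl])
    fix i assume "i \<in> {..<n - j}"
    then show "(\<Sum>z\<in>strings (n - j). if z ! i = b then f (y @ z) else 0)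
        = (\<Sum>z\<in>strings (n - j). if z ! 0 = b then f (y @ z) else 0)"
      using f y by (intro sum_nth_perm_invariant) simp_all
  qed
  also have "(\<Sum>z\<in>strings (n - j). if z ! 0 = b then f (y @ z) else 0)
      = (\<Sum>z\<in>strings (n - j - 1). f (y @ b # z))"
    using sum_strings_Suc_hd[where m = "n - Suc j" and b = b and g = "\<lambda>z. f (y @ z)"]
      Suc_diff_Suc[OF \<open>j < n\<close>] by simp
  finally show ?thesis
    by simp
qed

text \<open>By symmetry, under a permutation-invariant weight the letter following a prefix is \<open>b\<close>
  with conditional probability equal to the expected frequency of \<open>b\<close> in the suffix.\<close>

lemma perm_invariant_next_letter_ge:
  fixes f :: "'a::finite list \<Rightarrow> real"
  assumes f: "perm_invariant n f" and f0: "\<And>x. 0 \<le> f x" and y: "length y = j" and "j < n"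
    and "0 \<le> d"
    and counts: "\<And>z. length z = n - j \<Longrightarrow> f (y @ z) \<noteq> 0 \<Longrightarrow> real (n - j) * d \<le> real (count_list z b)"
  shows "d * (\<Sum>z\<in>strings (n - j). f (y @ z)) \<le> (\<Sum>z\<in>strings (n - j - 1). f (y @ b # z))"
proof -
  have "real (n - j) * (d * (\<Sum>z\<in>strings (n - j). f (y @ z)))
      = (\<Sum>z\<in>strings (n - j). f (y @ z) * (real (n - j) * d))"
    by (simp add: sum_distrib_left sum_distrib_right mult_ac)
  also have "\<dots> \<le> (\<Sum>z\<in>strings (n - j). f (y @ z) * real (count_list z b))"
    using counts f0 by (intro sum_mono) (metis mem_strings mult_left_mono mult_zero_left order_refl)
  also have "\<dots> = real (n - j) * (\<Sum>z\<in>strings (n - j - 1). f (y @ b # z))"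
    using f y \<open>j < n\<close> by (rule sum_count_perm_invariant)
  finally show ?thesis
    using \<open>j < n\<close> by simp
qed

lemma perm_invariant_prefix_lower_bound:
  fixes f :: "'a::finite list \<Rightarrow> real" and s :: "'a \<Rightarrow> real"
  assumes f: "perm_invariant n f" and f0: "\<And>x. 0 \<le> f x" and "k \<le> n"
    and s0: "\<And>b. 0 \<le> s b" and "0 \<le> c"
    and counts: "\<And>x b. length x = n \<Longrightarrow> f x \<noteq> 0 \<Longrightarrow> 0 < s b
      \<Longrightarrow> real k + real n * (s b * c) \<le> real (count_list x b)"
  shows "length y \<le> k
    \<Longrightarrow> (\<Sum>x\<in>strings n. f x) * prod_list (map (\<lambda>b. s b * c) y) \<le> (\<Sum>z\<in>strings (n - length y). f (y @ z))"
proof (induction y rule: rev_induct)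
  case (snoc b y)
  define j where "j = length y"
  have "j < n" and "j < k"
    using snoc.prems \<open>k \<le> n\<close> by (simp_all add: j_def)
  have "real (n - j) * (s b * c) \<le> real (count_list z b)"
    if z: "length z = n - j" and "f (y @ z) \<noteq> 0" for z
  proof (cases "0 < s b")
    case True
    have "real k + real n * (s b * c) \<le> real (count_list y b) + real (count_list z b)"
      using counts[OF _ \<open>f (y @ z) \<noteq> 0\<close> True] z \<open>j < n\<close> by (simp add: j_def)
    moreover have "count_list y b \<le> j"
      unfolding j_def by (rule count_le_length)
    moreover have "real (n - j) * (s b * c) \<le> real n * (s b * c)"
      using s0[of b] \<open>0 \<le> c\<close> by (intro mult_right_mono) auto
    ultimately show ?thesis
      using \<open>j < k\<close> by linarith
  qed (use s0[of b] in simp)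
  with f f0 j_def[symmetric] \<open>j < n\<close>
  have "s b * c * (\<Sum>z\<in>strings (n - j). f (y @ z)) \<le> (\<Sum>z\<in>strings (n - j - 1). f (y @ b # z))"
    using s0[of b] \<open>0 \<le> c\<close> by (intro perm_invariant_next_letter_ge) auto
  moreover have "s b * c * ((\<Sum>x\<in>strings n. f x) * prod_list (map (\<lambda>b. s b * c) y))
      \<le> s b * c * (\<Sum>z\<in>strings (n - j). f (y @ z))"
    using snoc s0[of b] \<open>0 \<le> c\<close> by (intro mult_left_mono) (simp_all add: j_def)
  ultimately show ?case
    by (simp add: j_def mult_ac)
qed simp

lemma perm_invariant_prefix_marginal_ge:
  fixes f g :: "'a::finite list \<Rightarrow> real" and s :: "'a \<Rightarrow> real"
  assumes f: "perm_invariant n f" and f0: "\<And>x. 0 \<le> f x" and fg: "\<And>x. f x \<le> g x" and "k \<le> n"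
    and s0: "\<And>b. 0 \<le> s b" and "0 \<le> c"
    and counts: "\<And>x b. length x = n \<Longrightarrow> f x \<noteq> 0 \<Longrightarrow> 0 < s b
      \<Longrightarrow> real k + real n * (s b * c) \<le> real (count_list x b)"
    and y: "y \<in> strings k"
  shows "(\<Sum>x\<in>strings n. f x) * c ^ k * iid k s y \<le> prefix_marginal n k g y"
proof -
  have "prod_list (map (\<lambda>b. s b * c) y) = prod_list (map s y) * c ^ length y"
    by (induction y) auto
  then have "(\<Sum>x\<in>strings n. f x) * c ^ k * iid k s y
      = (\<Sum>x\<in>strings n. f x) * prod_list (map (\<lambda>b. s b * c) y)"
    using y by (simp add: iid_eq_prod_list)
  also have "\<dots> \<le> (\<Sum>z\<in>strings (n - k). f (y @ z))"
    using perm_invariant_prefix_lower_bound[OF f f0 \<open>k \<le> n\<close> s0 \<open>0 \<le> c\<close> counts, of y] y by simp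
  also have "\<dots> \<le> (\<Sum>z\<in>strings (n - k). g (y @ z))"
    using fg by (intro sum_mono)
  also have "\<dots> = prefix_marginal n k g y"
    using y by (simp add: prefix_marginal_def)
  finally show ?thesis .
qed

definition type_nbhd :: "('a \<Rightarrow> real) \<Rightarrow> real \<Rightarrow> ('a \<Rightarrow> real) set" where
  "type_nbhd s \<eta> = {t. \<forall>b. 0 < s b \<longrightarrow> s b * exp (- \<eta>) < t b}"

lemma open_type_nbhd: "open (type_nbhd s \<eta> :: ('a::finite \<Rightarrow> real) set)"
proof -
  have "type_nbhd s \<eta> = {t. \<forall>b\<in>{b. 0 < s b}. t (id b) \<in> {s b * exp (- \<eta>)<..}}"
    by (auto simp: type_nbhd_def)
  moreover have "open {t::'a \<Rightarrow> real. \<forall>b\<in>{b. 0 < s b}. t (id b) \<in> {s b * exp (- \<eta>)<..}}"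
    by (rule product_topology_basis') auto
  ultimately show ?thesis
    by simp
qed

lemma mem_type_nbhd: "0 < \<eta> \<Longrightarrow> s \<in> type_nbhd s \<eta>"
  by (simp add: type_nbhd_def)

lemma sum_mass_le_cover:
  fixes q :: "'b \<Rightarrow> real"
  assumes "finite S" and "K \<subseteq> (\<Union>s\<in>S. U s)" and "\<And>x. 0 \<le> q x"
  shows "(\<Sum>x\<in>A. if f x \<in> K then q x else 0) \<le> (\<Sum>s\<in>S. \<Sum>x\<in>A. if f x \<in> U s then q x else 0)"
proof -
  have "(if f x \<in> K then q x else 0) \<le> (\<Sum>s\<in>S. if f x \<in> U s then q x else 0)" for x
  proof (cases "f x \<in> K")
    case True
    then obtain s where "s \<in> S" and "f x \<in> U s"
      using assms(2) by blast
    then have "(if f x \<in> U s then q x else 0) \<le> (\<Sum>s\<in>S. if f x \<in> U s then q x else 0)"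
      using assms(1,3) by (intro member_le_sum) auto
    with True \<open>f x \<in> U s\<close> show ?thesis
      by simp
  qed (use assms(3) in \<open>simp add: sum_nonneg\<close>)
  then have "(\<Sum>x\<in>A. if f x \<in> K then q x else 0) \<le> (\<Sum>x\<in>A. \<Sum>s\<in>S. if f x \<in> U s then q x else 0)"
    by (rule sum_mono)
  then show ?thesis
    by (simp only: sum.swap[of _ S])
qed

locale symmetric_family = dist_family +
  assumes convex: "\<And>n q r t. n \<ge> 1 \<Longrightarrow> q \<in> F n \<Longrightarrow> r \<in> F n \<Longrightarrow> 0 \<le> t \<Longrightarrow> t \<le> 1
      \<Longrightarrow> (\<lambda>xs. t * q xs + (1 - t) * r xs) \<in> F n"
    and marg: "\<And>n q. n \<ge> 1 \<Longrightarrow> q \<in> F (n + 1) \<Longrightarrow> marginal n q \<in> F n"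
    and perm: "\<And>n q \<sigma>. n \<ge> 1 \<Longrightarrow> q \<in> F n \<Longrightarrow> \<sigma> permutes {0..<n}
      \<Longrightarrow> (\<lambda>xs. q (permute_coords \<sigma> xs)) \<in> F n"
begin

lemma average_mem:
  assumes n: "n \<ge> 1" and "finite P" and "P \<noteq> {}" and "\<And>i. i \<in> P \<Longrightarrow> g i \<in> F n"
  shows "(\<lambda>x. (\<Sum>i\<in>P. g i x) / real (card P)) \<in> F n"
  using assms(2-)
proof (induction P rule: finite_ne_induct)
  case (insert i P)
  define t where "t = 1 / (real (card P) + 1)"
  have "card P > 0"
    using insert by (simp add: card_gt_0_iff)
  then have "0 \<le> t" "t \<le> 1"
    by (simp_all add: t_def)
  from convex[OF n insert.prems[of i] insert.IH this] insert.prems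
  have "(\<lambda>x. t * g i x + (1 - t) * ((\<Sum>i\<in>P. g i x) / real (card P))) \<in> F n"
    by simp
  moreover have "t * g i x + (1 - t) * ((\<Sum>i\<in>P. g i x) / real (card P))
      = (\<Sum>i\<in>insert i P. g i x) / real (card (insert i P))" for x
  proof -
    have "(1 - 1 / (c + 1)) * (S / c) = S / (c + 1)" if "c > 0" for c S :: real
      using that by (simp add: field_split_simps)
    then have "(1 - t) * ((\<Sum>i\<in>P. g i x) / real (card P)) = (\<Sum>i\<in>P. g i x) / (real (card P) + 1)"
      using \<open>card P > 0\<close> by (simp add: t_def)
    then show ?thesis
      using insert by (simp add: t_def add_divide_distrib add.commute)
  qed
  ultimately show ?case
    by simp
qed simp

lemma symmetrize_mem:
  assumes "n \<ge> 1" and "q \<in> F n"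
  shows "symmetrize n q \<in> F n"
proof -
  have "(\<lambda>x. (\<Sum>\<sigma>\<in>{\<sigma>. \<sigma> permutes {..<n}}. q (permute_list \<sigma> x)) / real (card {\<sigma>. \<sigma> permutes {..<n}}))
      \<in> F n"
  proof (rule average_mem[OF \<open>n \<ge> 1\<close>])
    show "{\<sigma>. \<sigma> permutes {..<n}} \<noteq> {}"
      using permutes_id by blast
    show "(\<lambda>x. q (permute_list \<sigma> x)) \<in> F n" if "\<sigma> \<in> {\<sigma>. \<sigma> permutes {..<n}}" for \<sigma>
      using perm[OF assms, of \<sigma>] that by (simp add: atLeast0LessThan permute_coords_def permute_list_def)
  qed (simp add: finite_permutations)
  then show ?thesis
    using card_permutations[of "{..<n}" n] by (simp add: symmetrize_def[abs_def])
qed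

lemma prefix_marginal_mem:
  assumes q: "q \<in> F n" and k: "1 \<le> k" "k \<le> n"
  shows "prefix_marginal n k q \<in> F k"
  using k(2)
proof (induction k rule: inc_induct)
  case base
  have "prefix_marginal n n q = q"
    using dist[OF _ q] k by (auto simp: fun_eq_iff prefix_marginal_def strings_0 is_dist_def)
  with q show ?case
    by simp
next
  case (step m)
  with k have "marginal m (prefix_marginal n (m + 1) q) \<in> F m"
    by (intro marg) simp_all
  with step show ?case
    by (simp add: marginal_prefix_marginal)
qed

lemma mass_type_nbhd_dominates:
  assumes s: "is_pdist s" and k: "1 \<le> k" "k \<le> n"
    and large: "\<And>b. 0 < s b \<Longrightarrow> real k \<le> real n * (s b * (exp (- \<eta>) - exp (- (2 * \<eta>))))"
    and q: "q \<in> F n"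
  obtains M where "M \<in> F k" and "\<And>y. y \<in> strings k \<Longrightarrow>
    (\<Sum>x\<in>strings n. if empirical x \<in> type_nbhd s \<eta> then q x else 0) * exp (- (2 * \<eta>)) ^ k * iid k s y
      \<le> M y"
proof
  define h where "h x = (if empirical x \<in> type_nbhd s \<eta> then 1 else (0::real))" for x :: "'a list"
  define qs where "qs = symmetrize n q"
  define f where "f x = h x * qs x" for x
  have n: "n \<ge> 1"
    using k by simp
  have qs: "qs \<in> F n"
    unfolding qs_def using n q by (rule symmetrize_mem)
  then have qs0: "0 \<le> qs x" for x
    using dist[OF n] by (simp add: is_dist_def)
  have h: "perm_invariant n h"
    by (auto simp: perm_invariant_def h_def empirical_permute_list)
  then have f: "perm_invariant n f"
    using perm_invariant_symmetrize[of n q] by (simp add: perm_invariant_def f_def qs_def)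
  have "(\<Sum>x\<in>strings n. f x) = (\<Sum>x\<in>strings n. h x * q x)"
    using sum_mult_symmetrize[OF h, of q] by (simp add: f_def qs_def)
  also have "\<dots> = (\<Sum>x\<in>strings n. if empirical x \<in> type_nbhd s \<eta> then q x else 0)"
    by (intro sum.cong) (simp_all add: h_def)
  finally have mass: "(\<Sum>x\<in>strings n. f x) = \<dots>" .
  have "real k + real n * (s b * exp (- (2 * \<eta>))) \<le> real (count_list x b)"
    if "length x = n" and "f x \<noteq> 0" and "0 < s b" for x b
  proof -
    have "s b * exp (- \<eta>) < real (count_list x b) / real n"
      using that by (auto simp: f_def h_def type_nbhd_def empirical_def split: if_splits)
    then have "real n * (s b * exp (- \<eta>)) < real (count_list x b)"
      using n by (simp add: less_divide_eq mult.commute)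
    with large[OF \<open>0 < s b\<close>] show ?thesis
      by (simp add: algebra_simps)
  qed
  with f qs0 s show "(\<Sum>x\<in>strings n. if empirical x \<in> type_nbhd s \<eta> then q x else 0)
      * exp (- (2 * \<eta>)) ^ k * iid k s y \<le> prefix_marginal n k qs y" if "y \<in> strings k" for y
    unfolding mass[symmetric] using k that
    by (intro perm_invariant_prefix_marginal_ge[OF f]) (auto simp: f_def h_def is_pdist_def)
  show "prefix_marginal n k qs \<in> F k"
    using qs k by (rule prefix_marginal_mem)
qed

lemma mass_type_nbhd_le:
  assumes s: "is_pdist s" and k: "1 \<le> k" "k \<le> n"
    and large: "\<And>b. 0 < s b \<Longrightarrow> real k \<le> real n * (s b * (exp (- \<eta>) - exp (- (2 * \<eta>))))"
    and q: "q \<in> F n"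
    and rate: "\<And>M. M \<in> F k \<Longrightarrow> ereal (real k * \<rho>) < KL (strings k) (iid k s) M"
  shows "(\<Sum>x\<in>strings n. if empirical x \<in> type_nbhd s \<eta> then q x else 0)
    \<le> exp (- (real k * (\<rho> - 2 * \<eta>)))"
proof -
  define \<mu> where "\<mu> = (\<Sum>x\<in>strings n. if empirical x \<in> type_nbhd s \<eta> then q x else 0)"
  define C where "C = \<mu> * exp (- (2 * \<eta>)) ^ k"
  show ?thesis
    unfolding \<mu>_def[symmetric]
  proof (cases "\<mu> > 0")
    case True
    obtain M where "M \<in> F k" and dom: "\<And>y. y \<in> strings k \<Longrightarrow> C * iid k s y \<le> M y"
      using mass_type_nbhd_dominates[OF s k large q] unfolding C_def \<mu>_def by blast
    have "C > 0"
      using True by (simp add: C_def)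
    have "ereal (real k * \<rho>) < KL (strings k) (iid k s) M"
      by (rule rate) fact
    also have "\<dots> \<le> ereal (- ln C)"
      using iid_nonneg[OF s] sum_iid[OF s] \<open>C > 0\<close> dom by (rule KL_le_of_dominates)
    also have "- ln C = - ln \<mu> + real k * (2 * \<eta>)"
      using True by (simp add: C_def ln_mult ln_realpow)
    finally have "ln \<mu> < - (real k * (\<rho> - 2 * \<eta>))"
      by (simp add: algebra_simps)
    then have "exp (ln \<mu>) < exp (- (real k * (\<rho> - 2 * \<eta>)))"
      by simp
    with True show "\<mu> \<le> exp (- (real k * (\<rho> - 2 * \<eta>)))"
      by simp
  qed (use exp_gt_zero[of "- (real k * (\<rho> - 2 * \<eta>))"] in linarith)
qed

end

section \<open>The converse bound\<close>

lemma eventually_le_real_mult: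
  assumes "0 < c"
  shows "\<forall>\<^sub>F n in sequentially. a \<le> real n * c"
proof -
  obtain N :: nat where "a / c \<le> real N"
    using real_arch_simple by blast
  then have "a \<le> real n * c" if "N \<le> n" for n
    using assms that by (simp add: pos_divide_le_eq) (meson mult_right_mono of_nat_le_iff order.trans less_imp_le)
  then show ?thesis
    by (auto simp: eventually_sequentially)
qed

lemma eventually_type_nbhd_large:
  fixes s :: "'a::finite \<Rightarrow> real"
  assumes "\<eta> > 0"
  shows "\<forall>\<^sub>F n in sequentially. k \<le> n \<and>
    (\<forall>b. 0 < s b \<longrightarrow> real k \<le> real n * (s b * (exp (- \<eta>) - exp (- (2 * \<eta>)))))"
proof -
  have "exp (- (2 * \<eta>)) < exp (- \<eta>)"
    using assms by simp
  then have "\<forall>\<^sub>F n in sequentially.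
      0 < s b \<longrightarrow> real k \<le> real n * (s b * (exp (- \<eta>) - exp (- (2 * \<eta>))))" for b
    by (cases "0 < s b") (auto intro: eventually_le_real_mult)
  then show ?thesis
    by (intro eventually_conj eventually_ge_at_top eventually_all_finite)
qed

locale stein_family = symmetric_family +
  assumes stein: "\<And>p. is_pdist p \<Longrightarrow> iid 1 p \<notin> F 1 \<Longrightarrow> \<exists>L. (D_reg F p \<longlonglongrightarrow> L) \<and> L > 0"
begin

lemma KL_iid_rate:
  assumes s: "is_pdist s" "iid 1 s \<notin> F 1"
  obtains \<rho> where "\<rho> > 0"
    and "\<forall>\<^sub>F k in sequentially. \<forall>M\<in>F k. ereal (real k * \<rho>) < KL (strings k) (iid k s) M"
proof -
  obtain L where L: "D_reg F s \<longlonglongrightarrow> L" "L > 0"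
    using stein[OF s] by blast
  obtain \<rho> where \<rho>: "0 < ereal \<rho>" "ereal \<rho> < L"
    using ereal_dense2[OF L(2)] by blast
  have "\<forall>\<^sub>F k in sequentially. \<forall>M\<in>F k. ereal (real k * \<rho>) < KL (strings k) (iid k s) M"
    using order_tendstoD(1)[OF L(1) \<rho>(2)] eventually_ge_at_top[of 1]
  proof eventually_elim
    case (elim k)
    define I where "I = (INF M\<in>F k. KL (strings k) (iid k s) M)"
    have "ereal \<rho> < I / ereal (real k)"
      using elim(1) by (simp add: D_reg_def I_def)
    then have "ereal (real k * \<rho>) < I"
      using elim(2) by (cases I) (simp_all add: field_simps)
    then show ?case
      unfolding I_def by (meson INF_lower order_less_le_trans)
  qed
  with \<rho>(1) show ?thesis
    using that by simp
qed

lemma mass_type_nbhd_eventually_le: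
  assumes s: "is_pdist s" "iid 1 s \<notin> F 1"
  shows "\<exists>\<eta>>0. \<forall>\<delta>>0. \<forall>\<^sub>F n in sequentially.
    \<forall>q\<in>F n. (\<Sum>x\<in>strings n. if empirical x \<in> type_nbhd s \<eta> then q x else 0) \<le> \<delta>"
proof -
  obtain \<rho> where "\<rho> > 0"
    and rate: "\<forall>\<^sub>F k in sequentially. \<forall>M\<in>F k. ereal (real k * \<rho>) < KL (strings k) (iid k s) M"
    using KL_iid_rate[OF s] by blast
  define \<eta> where "\<eta> = \<rho> / 4"
  have "\<forall>\<^sub>F n in sequentially.
      \<forall>q\<in>F n. (\<Sum>x\<in>strings n. if empirical x \<in> type_nbhd s \<eta> then q x else 0) \<le> \<delta>"
    if "\<delta> > 0" for \<delta>
  proof -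
    have "(\<lambda>k. exp (- (\<rho> / 2)) ^ k) \<longlonglongrightarrow> 0"
      using \<open>\<rho> > 0\<close> by (intro LIMSEQ_power_zero) auto
    then have "\<forall>\<^sub>F k in sequentially. exp (- (\<rho> / 2)) ^ k < \<delta>"
      using that by (rule order_tendstoD)
    with rate eventually_ge_at_top[of 1]
    have "\<forall>\<^sub>F k in sequentially. (\<forall>M\<in>F k. ereal (real k * \<rho>) < KL (strings k) (iid k s) M)
        \<and> 1 \<le> k \<and> exp (- (\<rho> / 2)) ^ k < \<delta>"
      by eventually_elim blast
    then obtain k where k_rate: "\<And>M. M \<in> F k \<Longrightarrow> ereal (real k * \<rho>) < KL (strings k) (iid k s) M"
      and "1 \<le> k" and k_small: "exp (- (\<rho> / 2)) ^ k < \<delta>"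
      by (auto simp: eventually_sequentially)
    have "\<eta> > 0"
      using \<open>\<rho> > 0\<close> by (simp add: \<eta>_def)
    from eventually_type_nbhd_large[OF this, where k = k and s = s] show ?thesis
    proof eventually_elim
      case (elim n)
      show ?case
      proof
        fix q assume "q \<in> F n"
        with s(1) \<open>1 \<le> k\<close> elim k_rate
        have "(\<Sum>x\<in>strings n. if empirical x \<in> type_nbhd s \<eta> then q x else 0)
            \<le> exp (- (real k * (\<rho> - 2 * \<eta>)))"
          by (intro mass_type_nbhd_le) auto
        also have "\<dots> = exp (- (\<rho> / 2)) ^ k"
          by (simp add: \<eta>_def exp_of_nat_mult[symmetric])
        finally show "(\<Sum>x\<in>strings n. if empirical x \<in> type_nbhd s \<eta> then q x else 0) \<le> \<delta>"
          using k_small by simp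
      qed
    qed
  qed
  moreover have "\<eta> > 0"
    using \<open>\<rho> > 0\<close> by (simp add: \<eta>_def)
  ultimately show ?thesis
    by blast
qed

lemma mass_compact_eventually_le:
  assumes K: "compact K" and outside: "\<And>t. t \<in> K \<Longrightarrow> is_pdist t \<and> iid 1 t \<notin> F 1"
    and \<epsilon>: "\<epsilon> > 0"
  shows "\<forall>\<^sub>F n in sequentially. \<forall>q\<in>F n. (\<Sum>x\<in>strings n. if empirical x \<in> K then q x else 0) \<le> \<epsilon>"
proof -
  have "\<forall>s\<in>K. \<exists>\<eta>>0. \<forall>\<delta>>0. \<forall>\<^sub>F n in sequentially.
      \<forall>q\<in>F n. (\<Sum>x\<in>strings n. if empirical x \<in> type_nbhd s \<eta> then q x else 0) \<le> \<delta>"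
    using outside by (blast intro: mass_type_nbhd_eventually_le)
  from bchoice[OF this] obtain \<eta> where \<eta>: "\<forall>s\<in>K. \<eta> s > 0 \<and> (\<forall>\<delta>>0. \<forall>\<^sub>F n in sequentially.
      \<forall>q\<in>F n. (\<Sum>x\<in>strings n. if empirical x \<in> type_nbhd s (\<eta> s) then q x else 0) \<le> \<delta>)"
    by blast
  then have "K \<subseteq> (\<Union>s\<in>K. type_nbhd s (\<eta> s))"
    by (auto intro!: mem_type_nbhd)
  then obtain S where S: "S \<subseteq> K" "finite S" "K \<subseteq> (\<Union>s\<in>S. type_nbhd s (\<eta> s))"
    using compactE_image[OF K, of K "\<lambda>s. type_nbhd s (\<eta> s)"] open_type_nbhd by metis
  define \<delta> where "\<delta> = \<epsilon> / (real (card S) + 1)"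
  have "\<delta> > 0"
    using \<epsilon> by (simp add: \<delta>_def)
  with \<eta> S(1,2) have "\<forall>\<^sub>F n in sequentially. \<forall>s\<in>S.
      \<forall>q\<in>F n. (\<Sum>x\<in>strings n. if empirical x \<in> type_nbhd s (\<eta> s) then q x else 0) \<le> \<delta>"
    by (intro eventually_ball_finite) auto
  with eventually_ge_at_top[of 1] show ?thesis
  proof eventually_elim
    case (elim n)
    show ?case
    proof
      fix q assume q: "q \<in> F n"
      then have "0 \<le> q x" for x
        using dist[OF elim(1) q] by (simp add: is_dist_def)
      then have "(\<Sum>x\<in>strings n. if empirical x \<in> K then q x else 0)
          \<le> (\<Sum>s\<in>S. \<Sum>x\<in>strings n. if empirical x \<in> type_nbhd s (\<eta> s) then q x else 0)"
        using S(2,3) by (intro sum_mass_le_cover)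
      also have "\<dots> \<le> (\<Sum>s\<in>S. \<delta>)"
        using elim(2) q by (intro sum_mono) blast
      also have "\<dots> \<le> \<epsilon>"
        using \<epsilon> by (simp add: \<delta>_def field_simps)
      finally show "(\<Sum>x\<in>strings n. if empirical x \<in> K then q x else 0) \<le> \<epsilon>" .
    qed
  qed
qed

lemma DH_rate_eventually_greater:
  assumes p: "is_pdist p" and \<epsilon>: "0 < \<epsilon>" and c: "ereal c < D_F F p"
  shows "\<forall>\<^sub>F n in sequentially. ereal c < DH_set n \<epsilon> (F n) (iid n p) / ereal (real n)"
proof -
  obtain c' where c': "ereal c < ereal c'" "ereal c' < D_F F p"
    using ereal_dense2[OF c] by blast
  have outside: "is_pdist t \<and> iid 1 t \<notin> F 1" if "t \<in> KL_sublevel p c'" for t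
    using that iid_1_notin_of_KL_sublevel[OF c'(2)] by (auto simp: KL_sublevel_def)
  have "((\<lambda>n. ln (real n + 1) / real n) \<longlongrightarrow> 0) sequentially"
    by real_asymp
  then have "((\<lambda>n. real CARD('a) * (ln (real n + 1) / real n)) \<longlongrightarrow> real CARD('a) * 0) sequentially"
    by (intro tendsto_mult tendsto_const)
  then have "\<forall>\<^sub>F n in sequentially. real CARD('a) * (ln (real n + 1) / real n) < c' - c"
    using c'(1) by (intro order_tendstoD) auto
  moreover have "\<forall>\<^sub>F n in sequentially.
      \<forall>q\<in>F n. (\<Sum>x\<in>strings n. if empirical x \<in> KL_sublevel p c' then q x else 0) \<le> \<epsilon>"
    using compact_KL_sublevel[OF p] outside \<epsilon> by (rule mass_compact_eventually_le)
  ultimately show ?thesis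
    using eventually_ge_at_top[of 1]
  proof eventually_elim
    case (elim n)
    have "ereal c < ereal (c' - real CARD('a) * (ln (real n + 1) / real n))"
      using elim(1) by simp
    also have "\<dots> = ereal (real n * c' - real CARD('a) * ln (real n + 1)) / ereal (real n)"
      using elim(3) by (simp add: field_simps)
    also have "\<dots> \<le> DH_set n \<epsilon> (F n) (iid n p) / ereal (real n)"
      using elim(2,3) by (intro ereal_divide_right_mono DH_set_ge_of_mass_le[OF p]) auto
    finally show ?case .
  qed
qed

end

theorem mainTheorem3:
  fixes F :: "nat \<Rightarrow> ('a::finite list \<Rightarrow> real) set"
  assumes dist: "\<And>n q. n \<ge> 1 \<Longrightarrow> q \<in> F n \<Longrightarrow> is_dist n q"
    and convex: "\<And>n q r t. n \<ge> 1 \<Longrightarrow> q \<in> F n \<Longrightarrow> r \<in> F n \<Longrightarrow> 0 \<le> t \<Longrightarrow> t \<le> 1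
        \<Longrightarrow> (\<lambda>xs. t * q xs + (1 - t) * r xs) \<in> F n"
    and closed: "\<And>n. n \<ge> 1 \<Longrightarrow> closed (F n)"
    and full_support: "\<exists>q\<in>F 1. \<forall>x. q [x] > 0"
    and marg: "\<And>n q. n \<ge> 1 \<Longrightarrow> q \<in> F (n + 1) \<Longrightarrow> marginal n q \<in> F n"
    and tens: "\<And>n m q q'. n \<ge> 1 \<Longrightarrow> m \<ge> 1 \<Longrightarrow> q \<in> F n \<Longrightarrow> q' \<in> F m
        \<Longrightarrow> tensor n m q q' \<in> F (n + m)"
    and perm: "\<And>n q \<sigma>. n \<ge> 1 \<Longrightarrow> q \<in> F n \<Longrightarrow> \<sigma> permutes {0..<n}
        \<Longrightarrow> (\<lambda>xs. q (permute_coords \<sigma> xs)) \<in> F n"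
    and stein: "\<And>p. is_pdist p \<Longrightarrow> iid 1 p \<notin> F 1
        \<Longrightarrow> \<exists>L. (D_reg F p \<longlonglongrightarrow> L) \<and> L > 0"
  shows "\<forall>p. is_pdist p \<longrightarrow>
           (\<forall>\<epsilon>. 0 < \<epsilon> \<and> \<epsilon> < 1 \<longrightarrow>
              ((\<lambda>n. DH_set n \<epsilon> (F n) (iid n p) / ereal (real n)) \<longlonglongrightarrow> D_F F p))
           \<and> ((\<lambda>\<epsilon>. liminf (\<lambda>n. DH_set n \<epsilon> (F n) (iid n p) / ereal (real n)))
                 \<longlongrightarrow> D_F F p) (at_right 0)"
proof -
  interpret tensor_family F
    by unfold_locales (fact dist tens)+
  interpret stein_family F
    by unfold_locales (fact dist convex marg perm stein)+
  have rate: "(\<lambda>n. DH_set n \<epsilon> (F n) (iid n p) / ereal (real n)) \<longlonglongrightarrow> D_F F p"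
    if p: "is_pdist p" and "0 < \<epsilon>" "\<epsilon> < 1" for p \<epsilon>
    unfolding order_tendsto_iff
  proof (intro conjI allI impI)
    fix l assume "l < D_F F p"
    then obtain c where "l < ereal c" and "ereal c < D_F F p"
      using ereal_dense2 by blast
    from DH_rate_eventually_greater[OF p that(2) this(2)]
    show "\<forall>\<^sub>F n in sequentially. l < DH_set n \<epsilon> (F n) (iid n p) / ereal (real n)"
      by (rule eventually_mono) (rule less_trans[OF \<open>l < ereal c\<close>])
  qed (rule DH_rate_eventually_less[OF that])
  have sanov: "((\<lambda>\<epsilon>. liminf (\<lambda>n. DH_set n \<epsilon> (F n) (iid n p) / ereal (real n))) \<longlongrightarrow> D_F F p) (at_right 0)"
    if "is_pdist p" for p
  proof -
    have "\<forall>\<^sub>F \<epsilon> in at_right 0. liminf (\<lambda>n. DH_set n \<epsilon> (F n) (iid n p) / ereal (real n)) = D_F F p"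
      using eventually_at_right_real[OF zero_less_one]
      by (rule eventually_mono) (simp add: lim_imp_Liminf rate[OF that])
    then show ?thesis
      by (rule tendsto_eventually)
  qed
  show ?thesis
    using rate sanov by blast
qed

end
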